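(* If $(n,x,y)\in\mathbb Z^3$ satisfies $n\ge 3$, $\max\{|x|,|y|\}\ge 2$ and $\Phi_n(x,y)<7^{\varphi(n)/2}$, then $\max\{|x|,|y|\}=2$.
   Context: For $n\ge 1$, $\phi_n(X)\in\mathbb Z[X]$ denotes the $n$-th cyclotomic polynomial (degree $\varphi(n)$, $\varphi$ Euler's totient function), and the cyclotomic binary form is $\Phi_n(X,Y)=Y^{\varphi(n)}\phi_n(X/Y)$. *)

theory Defs
  imports Complex_Main "HOL-Computational_Algebra.Polynomial" "HOL-Number_Theory.Totient"
begin

definition cyclotomic_poly :: "nat \<Rightarrow> complex poly" where
  "cyclotomic_poly n =
     (\<Prod>k\<in>{k. 1 \<le> k \<and> k \<le> n \<and> coprime k n}. [:- cis (2 * pi * real k / real n), 1:])"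

definition cyclotomic_form :: "nat \<Rightarrow> complex \<Rightarrow> complex \<Rightarrow> complex" where
  "cyclotomic_form n x y =
     (\<Sum>i\<le>totient n. coeff (cyclotomic_poly n) i * x ^ i * y ^ (totient n - i))"

end

theory Submission
  imports Defs "HOL-Number_Theory.Prime_Powers" "HOL-Analysis.Convex"
begin

text \<open>
  Pairing each primitive n-th root of unity z with its conjugate writes Phi_n(a, b), for real a
  and b, as a product of totient(n)/2 factors |a - z b|^2. With e the sign of a b, each factor equals
  (a - e b)^2 + |a b| |e - z|^2, so by weighted AM-GM the product is at least
  (a^2 - |a b| + b^2)^(totient(n)/2) times a nonnegative power of |Phi_n(e)|. That power is at
  least 1: Moebius inversion of the factorisation of X^n - 1 into the Phi_d, d dividing n, gives
  ln |Phi_n(1)| = Lambda(n) and ln |Phi_n(-1)| = Lambda(n/2) or 0. Finally a^2 - |a b| + b^2 >= 7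
  for integers with max |a| |b| >= 3.
\<close>

definition unity_root :: "nat \<Rightarrow> nat \<Rightarrow> complex" where
  "unity_root n k = cis (2 * pi * real k / real n)"

lemma unity_root_self: "n > 0 \<Longrightarrow> unity_root n n = 1"
  by (simp add: unity_root_def complex_eq_iff)

lemma unity_root_power_self: "n > 0 \<Longrightarrow> unity_root n k ^ n = 1"
proof -
  assume "n > 0"
  then have "unity_root n k ^ n = cis (2 * pi) ^ k"
    by (simp add: unity_root_def DeMoivre mult_ac)
  also have "cis (2 * pi) = 1" by (simp add: complex_eq_iff)
  finally show ?thesis by simp
qed

lemma unity_root_mult_cancel: "g > 0 \<Longrightarrow> unity_root (d * g) (k * g) = unity_root d k"
  by (simp add: unity_root_def mult_ac)

lemma unity_root_0: "unity_root n 0 = 1"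
  by (simp add: unity_root_def)

lemma unity_root_double: "m > 0 \<Longrightarrow> unity_root (2 * m) m = -1"
  by (simp add: unity_root_def complex_eq_iff)

lemma unity_root_reflect: "k \<le> n \<Longrightarrow> unity_root n (n - k) = cnj (unity_root n k)"
proof (cases "n = 0")
  case False
  assume "k \<le> n"
  with False have "2 * pi * real (n - k) / real n = 2 * pi - 2 * pi * real k / real n"
    by (simp add: of_nat_diff field_simps)
  then show ?thesis
    by (simp add: unity_root_def cis_cnj complex_eq_iff cos_diff sin_diff)
qed (simp add: unity_root_def)

lemma inj_on_unity_root: "n > 0 \<Longrightarrow> inj_on (unity_root n) {..<n}"
  using bij_betw_roots_unity unfolding unity_root_def bij_betw_def by blast

lemma unity_root_neq_1: "0 < k \<Longrightarrow> k < n \<Longrightarrow> unity_root n k \<noteq> 1"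
  using inj_onD[OF inj_on_unity_root, of n k 0] by (auto simp: unity_root_0)

lemma unity_root_eq_minus_1_iff:
  assumes "0 < k" "k < n"
  shows "unity_root n k = -1 \<longleftrightarrow> n = 2 * k"
proof
  assume minus_1: "unity_root n k = -1"
  have "even n"
  proof (rule ccontr)
    assume "odd n"
    then have "unity_root n k ^ n = -1" by (simp add: minus_1)
    with unity_root_power_self[of n k] assms show False by simp
  qed
  then obtain m where m: "n = 2 * m" by blast
  with assms have "unity_root n m = -1"
    using unity_root_double[of m] by simp
  then have "unity_root n k = unity_root n m"
    by (simp add: minus_1)
  with assms m have "k = m"
    by (intro inj_onD[OF inj_on_unity_root]) auto
  with m show "n = 2 * k" by simp
qed (use assms unity_root_double in auto)

lemma cyclotomic_poly_altdef:
  "cyclotomic_poly n = (\<Prod>k\<in>totatives n. [:- unity_root n k, 1:])"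
proof -
  have "{k. 1 \<le> k \<and> k \<le> n \<and> coprime k n} = totatives n"
    by (auto simp: totatives_def)
  then show ?thesis by (simp add: cyclotomic_poly_def unity_root_def)
qed

lemma poly_cyclotomic_poly:
  "poly (cyclotomic_poly n) z = (\<Prod>k\<in>totatives n. z - unity_root n k)"
  by (simp add: cyclotomic_poly_altdef poly_prod)

lemma homogenize_prod_linear_factors:
  fixes a :: "'i \<Rightarrow> 'a :: field"
  assumes "finite I"
  shows "(\<Sum>i\<le>card I. coeff (\<Prod>j\<in>I. [:- a j, 1:]) i * x ^ i * y ^ (card I - i))
         = (\<Prod>j\<in>I. x - a j * y)"
proof -
  define p where "p = (\<Prod>j\<in>I. [:- a j, 1:])"
  have deg: "degree p = card I"
    unfolding p_def using assms by (subst degree_prod_eq_sum_degree) auto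
  have lead: "lead_coeff p = 1"
    unfolding p_def by (simp add: lead_coeff_prod)
  show ?thesis
  proof (cases "y = 0")
    case True
    then have "(\<Sum>i\<le>card I. coeff p i * x ^ i * y ^ (card I - i)) = lead_coeff p * x ^ card I"
      by (subst sum.remove[of _ "card I"]) (auto simp: deg intro!: sum.neutral)
    with True lead show ?thesis by (simp add: p_def)
  next
    case False
    have "(\<Sum>i\<le>card I. coeff p i * x ^ i * y ^ (card I - i))
        = y ^ card I * (\<Sum>i\<le>card I. coeff p i * (x / y) ^ i)"
      using False by (auto simp: sum_distrib_left power_divide power_diff field_simps
                           intro!: sum.cong)
    also have "\<dots> = y ^ card I * poly p (x / y)"
      by (simp add: poly_altdef deg)
    also have "\<dots> = (\<Prod>j\<in>I. y * (x / y - a j))"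
      by (simp add: p_def poly_prod prod.distrib)
    also have "\<dots> = (\<Prod>j\<in>I. x - a j * y)"
      using False by (intro prod.cong refl) (simp add: field_simps)
    finally show ?thesis by (simp add: p_def)
  qed
qed

lemma cyclotomic_form_eq_prod:
  "cyclotomic_form n x y = (\<Prod>k\<in>totatives n. x - unity_root n k * y)"
  using homogenize_prod_linear_factors[of "totatives n" "unity_root n" x y]
  by (simp add: cyclotomic_form_def cyclotomic_poly_altdef totient_def)

definition lower_totatives :: "nat \<Rightarrow> nat set" where
  "lower_totatives n = {k \<in> totatives n. 2 * k < n}"

lemma totatives_reflect: "k \<in> totatives n \<Longrightarrow> k < n \<Longrightarrow> n - k \<in> totatives n"
  by (auto simp: in_totatives_iff coprime_iff_gcd_eq_1 gcd_diff2_nat)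

lemma half_not_in_totatives: "n \<ge> 3 \<Longrightarrow> k \<in> totatives n \<Longrightarrow> n \<noteq> 2 * k"
  by (auto simp: in_totatives_iff)

lemma totatives_eq_lower_Un_reflect:
  assumes "n \<ge> 3"
  shows "totatives n = lower_totatives n \<union> (\<lambda>k. n - k) ` lower_totatives n"
proof (intro equalityI subsetI)
  fix k assume k: "k \<in> totatives n"
  with assms have "k < n" by (simp add: totatives_less)
  show "k \<in> lower_totatives n \<union> (\<lambda>k. n - k) ` lower_totatives n"
  proof (cases "2 * k < n")
    case False
    with half_not_in_totatives[OF assms k] \<open>k < n\<close> have "n - k \<in> lower_totatives n"
      using totatives_reflect[OF k] by (auto simp: lower_totatives_def)
    moreover have "k = n - (n - k)" using \<open>k < n\<close> by simp
    ultimately show ?thesis by blast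
  qed (use k in \<open>auto simp: lower_totatives_def\<close>)
qed (auto simp: lower_totatives_def intro: totatives_reflect)

lemma finite_lower_totatives [simp]: "finite (lower_totatives n)"
  by (simp add: lower_totatives_def)

lemma lower_totatives_reflect_disjoint:
  "lower_totatives n \<inter> (\<lambda>k. n - k) ` lower_totatives n = {}"
  by (auto simp: lower_totatives_def)

lemma inj_on_lower_totatives_reflect: "inj_on (\<lambda>k. n - k) (lower_totatives n)"
  by (auto simp: inj_on_def lower_totatives_def)

lemma totient_eq_double_card_lower_totatives:
  assumes "n \<ge> 3"
  shows "totient n = 2 * card (lower_totatives n)"
  using card_Un_disjoint[OF _ _ lower_totatives_reflect_disjoint, of n]
    card_image[OF inj_on_lower_totatives_reflect, of n]
  unfolding totient_def totatives_eq_lower_Un_reflect[OF assms] by simp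

lemma prod_totatives_reflect_pairs:
  assumes "n \<ge> 3"
  shows "(\<Prod>k\<in>totatives n. f k) = (\<Prod>k\<in>lower_totatives n. f k * f (n - k))"
  using prod.union_disjoint[OF _ _ lower_totatives_reflect_disjoint, where g = f]
    prod.reindex[OF inj_on_lower_totatives_reflect, where g = f]
  unfolding totatives_eq_lower_Un_reflect[OF assms] by (simp add: prod.distrib)

lemma cmod_sub_cis_mult_square:
  "(cmod (of_real a - cis t * of_real b))\<^sup>2 = a\<^sup>2 + b\<^sup>2 - 2 * a * b * cos t"
proof -
  have "(cmod (of_real a - cis t * of_real b))\<^sup>2 = (a - b * cos t)\<^sup>2 + (b * sin t)\<^sup>2"
    by (simp add: cmod_power2 mult.commute)
  also have "\<dots> = a\<^sup>2 + b\<^sup>2 - 2 * a * b * cos t"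
    by (simp add: power2_diff power_mult_distrib sin_squared_eq algebra_simps)
  finally show ?thesis .
qed

lemma cyclotomic_form_of_real:
  fixes a b :: real
  assumes "n \<ge> 3"
  shows "cyclotomic_form n (of_real a) (of_real b)
           = of_real (\<Prod>k\<in>lower_totatives n. (cmod (of_real a - unity_root n k * of_real b))\<^sup>2)"
proof -
  have "(of_real a - unity_root n k * of_real b) * (of_real a - unity_root n (n - k) * of_real b)
          = of_real ((cmod (of_real a - unity_root n k * of_real b))\<^sup>2)"
    if "k \<in> lower_totatives n" for k
    using that unfolding complex_norm_square
    by (simp add: unity_root_reflect lower_totatives_def)
  then show ?thesis
    by (simp add: cyclotomic_form_eq_prod prod_totatives_reflect_pairs[OF assms])
qed

lemma prod_unity_roots_by_divisors:
  assumes "n > 0"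
  shows "(\<Prod>k\<in>{1..n}. f (unity_root n k))
           = (\<Prod>d | d dvd n. \<Prod>k\<in>totatives d. f (unity_root d k))"
proof -
  define A where "A g = {k\<in>{0<..n}. gcd k n = g}" for g
  have "{1..n} = (\<Union>g\<in>{g. g dvd n}. A g)"
    by (auto simp: A_def)
  then have "(\<Prod>k\<in>{1..n}. f (unity_root n k)) = (\<Prod>k\<in>(\<Union>g\<in>{g. g dvd n}. A g). f (unity_root n k))"
    by simp
  also have "\<dots> = (\<Prod>g | g dvd n. \<Prod>k\<in>A g. f (unity_root n k))"
    using assms by (intro prod.UNION_disjoint) (auto simp: A_def)
  also have "\<dots> = (\<Prod>g | g dvd n. \<Prod>k\<in>totatives (n div g). f (unity_root (n div g) k))"
  proof (rule prod.cong[OF refl])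
    fix g assume "g \<in> {g. g dvd n}"
    then have g: "g dvd n" "g > 0" using assms by auto
    have "(\<Prod>k\<in>A g. f (unity_root n k)) = (\<Prod>k\<in>totatives (n div g). f (unity_root n (k * g)))"
      unfolding A_def by (rule prod.reindex_bij_betw[OF bij_betw_totatives_gcd_eq[OF g(1) assms], symmetric])
    also have "\<dots> = (\<Prod>k\<in>totatives (n div g). f (unity_root (n div g) k))"
      using g unity_root_mult_cancel[of g "n div g"] by simp
    finally show "(\<Prod>k\<in>A g. f (unity_root n k))
                    = (\<Prod>k\<in>totatives (n div g). f (unity_root (n div g) k))" .
  qed
  also have "\<dots> = (\<Prod>d | d dvd n. \<Prod>k\<in>totatives d. f (unity_root d k))"
    by (rule prod.reindex_bij_witness[where i = "(div) n" and j = "(div) n"])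
       (use assms in \<open>auto elim: dvdE\<close>)
  finally show ?thesis .
qed

lemma prod_unity_roots_linear_factors:
  assumes "n > 0"
  shows "(\<Prod>k\<in>{1..n}. [:- unity_root n k, 1:]) = monom 1 n - 1"
proof -
  have shift: "(\<Prod>k\<in>{1..n}. g (unity_root n k)) = (\<Prod>k\<in>{..<n}. g (unity_root n k))"
    for g :: "complex \<Rightarrow> complex poly"
  proof -
    have "{1..n} = insert n {1..<n}" "{..<n} = insert 0 {1..<n}" using assms by auto
    then show ?thesis using assms by (simp add: unity_root_self unity_root_0)
  qed
  have roots: "bij_betw (unity_root n) {..<n} {z. z ^ n = 1}"
    using bij_betw_roots_unity[OF assms] unfolding unity_root_def by simp
  define Q where "Q = (\<Prod>z\<in>{z::complex. z ^ n = 1}. [:- z, 1:])"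
  have Q: "(\<Prod>k\<in>{1..n}. [:- unity_root n k, 1:]) = Q"
    using shift[of "\<lambda>z. [:- z, 1:]"] prod.reindex_bij_betw[OF roots, of "\<lambda>z. [:- z, 1:]"]
    by (simp add: Q_def)
  have degree_Q: "degree Q = n"
    unfolding Q_def using assms
    by (simp add: degree_prod_eq_sum_degree card_roots_unity_eq finite_roots_unity)
  have lead_Q: "lead_coeff Q = 1"
    unfolding Q_def by (simp add: lead_coeff_prod)
  have "Q = monom 1 n - 1"
  proof (rule poly_eqI_degree_lead_coeff[where n = n and A = "{z. z ^ n = 1}"])
    show "n \<le> card {z::complex. z ^ n = 1}" by (simp add: card_roots_unity_eq assms)
    show "degree (monom (1::complex) n - 1) \<le> n"
      by (rule degree_diff_le) (auto simp: degree_monom_le)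
    show "poly Q z = poly (monom 1 n - 1) z" if "z \<in> {z. z ^ n = 1}" for z
      using that assms finite_roots_unity[of n]
      by (auto simp: Q_def poly_prod poly_monom intro!: prod_zero)
    show "coeff Q n = coeff (monom 1 n - 1) n"
      using lead_Q assms by (simp add: degree_Q)
  qed (use degree_Q in auto)
  with Q show ?thesis by simp
qed

lemma prod_cyclotomic_poly_divisors:
  "n > 0 \<Longrightarrow> (\<Prod>d | d dvd n. cyclotomic_poly d) = monom 1 n - 1"
  using prod_unity_roots_by_divisors[of n "\<lambda>z. [:- z, 1:]"] prod_unity_roots_linear_factors[of n]
  by (simp add: cyclotomic_poly_altdef)

lemma cyclotomic_poly_1: "cyclotomic_poly 1 = [:-1, 1:]"
  by (simp add: cyclotomic_poly_altdef unity_root_self)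

lemma cyclotomic_poly_2: "cyclotomic_poly 2 = [:1, 1:]"
proof -
  have "totatives 2 = {1}" by (auto simp: totatives_prime)
  then show ?thesis using unity_root_double[of 1] by (simp add: cyclotomic_poly_altdef)
qed

lemma sum_power_double_range:
  fixes x :: "'a :: comm_semiring_1"
  shows "(\<Sum>i<2 * m. x ^ i) = (1 + x) * (\<Sum>j<m. x ^ (2 * j))"
  by (induction m) (auto simp: algebra_simps)

lemma prod_cyclotomic_poly_nontrivial_divisors:
  assumes "n > 0"
  shows "(\<Prod>d\<in>{d. d dvd n} - {1}. cyclotomic_poly d) = (\<Sum>i<n. [:0, 1:] ^ i)"
proof -
  have split: "(\<Prod>d | d dvd n. cyclotomic_poly d)
                 = cyclotomic_poly 1 * (\<Prod>d\<in>{d. d dvd n} - {1}. cyclotomic_poly d)"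
    using assms by (intro prod.remove) auto
  have "cyclotomic_poly 1 * (\<Prod>d\<in>{d. d dvd n} - {1}. cyclotomic_poly d)
          = [:0, 1:] ^ n - 1"
    unfolding split[symmetric] prod_cyclotomic_poly_divisors[OF assms] by (simp add: monom_altdef)
  also have "\<dots> = cyclotomic_poly 1 * (\<Sum>i<n. [:0, 1:] ^ i)"
    unfolding cyclotomic_poly_1 power_diff_1_eq by (simp add: left_diff_distrib)
  finally show ?thesis
    by (rule mult_left_cancel[THEN iffD1, rotated]) (unfold cyclotomic_poly_1, simp)
qed

lemma prod_cyclotomic_poly_at_1:
  "n > 0 \<Longrightarrow> (\<Prod>d\<in>{d. d dvd n} - {1}. poly (cyclotomic_poly d) 1) = of_nat n"
  using arg_cong[OF prod_cyclotomic_poly_nontrivial_divisors, of n "\<lambda>p. poly p 1"]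
  by (simp add: poly_prod poly_sum)

lemma prod_cyclotomic_poly_at_minus_1:
  assumes "n > 0"
  shows "(\<Prod>d\<in>{d. d dvd n} - {1, 2}. poly (cyclotomic_poly d) (-1))
           = (if even n then of_nat (n div 2) else 1)"
proof (cases "even n")
  case True
  then obtain m where m: "n = 2 * m" by blast
  have "cyclotomic_poly 2 * (\<Prod>d\<in>{d. d dvd n} - {1, 2}. cyclotomic_poly d)
          = (\<Prod>d\<in>{d. d dvd n} - {1}. cyclotomic_poly d)"
    using assms True by (subst Diff_insert2, intro prod.remove[symmetric]) auto
  also have "\<dots> = cyclotomic_poly 2 * (\<Sum>j<m. [:0, 1:] ^ (2 * j))"
    unfolding prod_cyclotomic_poly_nontrivial_divisors[OF assms] cyclotomic_poly_2
    using sum_power_double_range[of "[:0, 1 :: complex:]" m] m by (simp add: one_pCons)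
  finally have "(\<Prod>d\<in>{d. d dvd n} - {1, 2}. cyclotomic_poly d) = (\<Sum>j<m. [:0, 1:] ^ (2 * j))"
    by (rule mult_left_cancel[THEN iffD1, rotated]) (unfold cyclotomic_poly_2, simp)
  from arg_cong[OF this, of "\<lambda>p. poly p (-1)"] show ?thesis
    using True m by (simp add: poly_prod poly_sum)
next
  case False
  then obtain m where m: "n = 2 * m + 1" by (blast elim: oddE)
  have "{d. d dvd n} - {1, 2} = {d. d dvd n} - {1}"
    using False by (auto dest: dvd_trans[of 2])
  moreover have "(\<Sum>i<2 * m + 1. (-1) ^ i) = (1 :: complex)"
    by (induction m) auto
  ultimately show ?thesis
    using arg_cong[OF prod_cyclotomic_poly_nontrivial_divisors[OF assms], of "\<lambda>p. poly p (-1)"]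
      False m by (simp add: poly_prod poly_sum)
qed

lemma divisor_sum_eq_imp_eq:
  fixes F G :: "nat \<Rightarrow> 'a :: cancel_comm_monoid_add"
  assumes sums: "\<And>m. m > 0 \<Longrightarrow> (\<Sum>d | d dvd m. F d) = (\<Sum>d | d dvd m. G d)"
    and "n > 0"
  shows "F n = G n"
  using \<open>n > 0\<close>
proof (induction n rule: less_induct)
  case (less n)
  have proper: "(\<Sum>d\<in>{d. d dvd n} - {n}. F d) = (\<Sum>d\<in>{d. d dvd n} - {n}. G d)"
  proof (rule sum.cong[OF refl])
    fix d assume "d \<in> {d. d dvd n} - {n}"
    with less.prems have "d < n" "d > 0"
      using dvd_imp_le[of d n] dvd_pos_nat[of n d] by auto
    then show "F d = G d" by (rule less.IH)
  qed
  have "F n + (\<Sum>d\<in>{d. d dvd n} - {n}. F d) = G n + (\<Sum>d\<in>{d. d dvd n} - {n}. G d)"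
    using sums[OF less.prems] less.prems by (simp add: sum.remove[of _ n])
  with proper show ?case by simp
qed

text \<open>The divisors in E are those whose factor may vanish (Phi_1 at 1, Phi_2 at -1); they are
  left out of the products and contribute 0 to the inverted function.\<close>

lemma ln_norm_by_divisor_inversion:
  fixes z :: "nat \<Rightarrow> complex" and G :: "nat \<Rightarrow> real"
  assumes nonzero: "\<And>d. d > 0 \<Longrightarrow> d \<notin> E \<Longrightarrow> z d \<noteq> 0"
    and sums: "\<And>m. m > 0 \<Longrightarrow> ln (cmod (\<Prod>d\<in>{d. d dvd m} - E. z d)) = (\<Sum>d | d dvd m. G d)"
    and "n > 0" "n \<notin> E"
  shows "ln (cmod (z n)) = G n"
proof -
  define F where "F d = (if d \<notin> E then ln (cmod (z d)) else 0)" for d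
  have "F n = G n"
  proof (rule divisor_sum_eq_imp_eq[OF _ \<open>n > 0\<close>])
    fix m :: nat assume "m > 0"
    have "(\<Sum>d\<in>{d \<in> {d. d dvd m}. d \<notin> E}. ln (cmod (z d))) = (\<Sum>d | d dvd m. F d)"
      unfolding F_def using \<open>m > 0\<close> by (intro sum.inter_filter) simp
    moreover have "{d \<in> {d. d dvd m}. d \<notin> E} = {d. d dvd m} - E"
      by blast
    ultimately have "(\<Sum>d | d dvd m. F d) = (\<Sum>d\<in>{d. d dvd m} - E. ln (cmod (z d)))"
      by simp
    also have "\<dots> = ln (\<Prod>d\<in>{d. d dvd m} - E. cmod (z d))"
      using \<open>m > 0\<close> nonzero by (subst ln_prod) (auto intro: dvd_pos_nat)
    also have "\<dots> = (\<Sum>d | d dvd m. G d)"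
      using sums[OF \<open>m > 0\<close>] by (simp add: prod_norm)
    finally show "(\<Sum>d | d dvd m. F d) = (\<Sum>d | d dvd m. G d)" .
  qed
  with \<open>n \<notin> E\<close> show ?thesis by (simp add: F_def)
qed

lemma cyclotomic_poly_at_1_neq_0:
  assumes "n \<ge> 2"
  shows "poly (cyclotomic_poly n) 1 \<noteq> 0"
proof -
  have "unity_root n k \<noteq> 1" if "k \<in> totatives n" for k
    using that assms totatives_less[OF that] by (intro unity_root_neq_1) (auto simp: in_totatives_iff)
  then show ?thesis by (auto simp: poly_cyclotomic_poly)
qed

lemma cyclotomic_poly_at_minus_1_neq_0:
  assumes "n \<ge> 3"
  shows "poly (cyclotomic_poly n) (-1) \<noteq> 0"
proof -
  have "unity_root n k \<noteq> -1" if "k \<in> totatives n" for k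
    using that assms totatives_less[OF that] half_not_in_totatives[OF assms that]
    by (subst unity_root_eq_minus_1_iff) (auto simp: in_totatives_iff)
  then show ?thesis by (force simp: poly_cyclotomic_poly)
qed

lemma ln_norm_cyclotomic_poly_at_1:
  assumes "n \<ge> 2"
  shows "ln (cmod (poly (cyclotomic_poly n) 1)) = mangoldt n"
proof (rule ln_norm_by_divisor_inversion[where E = "{1}"])
  fix m :: nat assume "m > 0"
  then show "ln (cmod (\<Prod>d\<in>{d. d dvd m} - {1}. poly (cyclotomic_poly d) 1)) = (\<Sum>d | d dvd m. mangoldt d)"
    by (simp only: prod_cyclotomic_poly_at_1 mangoldt_sum) simp
qed (use assms cyclotomic_poly_at_1_neq_0 in auto)

lemma sum_divisors_mangoldt_half:
  assumes "m > 0"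
  shows "(\<Sum>d | d dvd m. if even d then mangoldt (d div 2) else 0)
           = (if even m then ln (real (m div 2)) else (0 :: real))"
proof -
  have "(\<Sum>d | d dvd m. if even d then mangoldt (d div 2) else 0)
          = (\<Sum>d\<in>(\<lambda>e. 2 * e) ` {e. 2 * e dvd m}. mangoldt (d div 2) :: real)"
    using assms by (simp add: sum.inter_filter[symmetric]) (intro sum.cong; auto)
  also have "\<dots> = (\<Sum>e | 2 * e dvd m. mangoldt e)"
    by (subst sum.reindex) (auto simp: inj_on_def)
  also have "\<dots> = (if even m then ln (real (m div 2)) else 0)"
  proof (cases "even m")
    case True
    then have "{e. 2 * e dvd m} = {e. e dvd m div 2}"
      by (auto elim!: evenE)
    moreover have "m div 2 \<noteq> 0" using True assms by auto
    ultimately show ?thesis using True by (simp add: mangoldt_sum)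
  next
    case False
    then have "{e. 2 * e dvd m} = {}"
      by (auto dest: dvd_mult_left)
    with False show ?thesis by simp
  qed
  finally show ?thesis .
qed

lemma ln_norm_cyclotomic_poly_at_minus_1:
  assumes "n \<ge> 3"
  shows "ln (cmod (poly (cyclotomic_poly n) (-1))) = (if even n then mangoldt (n div 2) else 0)"
proof (rule ln_norm_by_divisor_inversion
         [where E = "{1, 2}" and G = "\<lambda>d. if even d then mangoldt (d div 2) else 0"])
  fix m :: nat assume "m > 0"
  then show "ln (cmod (\<Prod>d\<in>{d. d dvd m} - {1, 2}. poly (cyclotomic_poly d) (-1)))
               = (\<Sum>d | d dvd m. if even d then mangoldt (d div 2) else 0)"
    by (simp only: prod_cyclotomic_poly_at_minus_1 sum_divisors_mangoldt_half) simp
qed (use assms cyclotomic_poly_at_minus_1_neq_0 in auto)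

lemma one_le_norm_cyclotomic_poly_at_sign:
  assumes "n \<ge> 3" "e = 1 \<or> e = -1"
  shows "1 \<le> cmod (poly (cyclotomic_poly n) e)"
proof -
  have "poly (cyclotomic_poly n) e \<noteq> 0" "0 \<le> ln (cmod (poly (cyclotomic_poly n) e))"
    using assms cyclotomic_poly_at_1_neq_0[of n] cyclotomic_poly_at_minus_1_neq_0[of n]
      ln_norm_cyclotomic_poly_at_1[of n] ln_norm_cyclotomic_poly_at_minus_1[of n]
    by (auto simp: mangoldt_nonneg)
  then show ?thesis by (simp add: ln_ge_zero_iff)
qed

lemma power_le_prod_affine:
  fixes A B :: real and u :: "'i \<Rightarrow> real"
  assumes "finite I" "A \<ge> 0" "B \<ge> 0" "A + B > 0"
    and "\<And>k. k \<in> I \<Longrightarrow> u k > 0" "prod u I \<ge> 1"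
  shows "(A + B) ^ card I \<le> (\<Prod>k\<in>I. A + B * u k)"
proof -
  define w where "w = B / (A + B)"
  have w: "0 \<le> w" "w \<le> 1"
    using assms by (auto simp: w_def field_simps)
  have "A / (A + B) + w = 1"
    using assms by (simp add: w_def add_divide_distrib[symmetric])
  have factor: "(A + B) * u k powr w \<le> A + B * u k" if "k \<in> I" for k
  proof -
    have "1 powr (A / (A + B)) * u k powr w \<le> A / (A + B) * 1 + w * u k"
      using assms that w \<open>A / (A + B) + w = 1\<close> by (intro Youngs_inequality_0) auto
    then have "(A + B) * u k powr w \<le> (A + B) * (A / (A + B) + w * u k)"
      using assms by (intro mult_left_mono) auto
    also have "\<dots> = A + B * u k"
      using assms by (simp add: w_def distrib_left)
    finally show ?thesis .
  qed
  have "1 \<le> prod u I powr w"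
    using assms w by (intro ge_one_powr_ge_zero) auto
  then have "(A + B) ^ card I \<le> (A + B) ^ card I * prod u I powr w"
    using assms mult_left_mono[of 1 "prod u I powr w" "(A + B) ^ card I"] by simp
  also have "\<dots> = (\<Prod>k\<in>I. (A + B) * u k powr w)"
    using assms by (simp add: prod_powr_distrib prod.distrib less_imp_le)
  also have "\<dots> \<le> (\<Prod>k\<in>I. A + B * u k)"
    using assms factor by (intro prod_mono) auto
  finally show ?thesis .
qed

lemma cyclotomic_form_lower_bound:
  fixes a b :: real
  defines "q \<equiv> a\<^sup>2 - \<bar>a * b\<bar> + b\<^sup>2"
  assumes "n \<ge> 3" "q > 0"
  shows "q powr (totient n / 2) \<le> Re (cyclotomic_form n (of_real a) (of_real b))"
proof -
  define e :: real where "e = (if a * b \<ge> 0 then 1 else -1)"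
  define A where "A = (a - e * b)\<^sup>2"
  define B where "B = \<bar>a * b\<bar>"
  define u where "u k = (cmod (of_real e - unity_root n k * of_real 1))\<^sup>2" for k
  have e: "e = 1 \<or> e = -1" "e * (a * b) = B"
    by (auto simp: e_def B_def)
  have "A + B = q"
    using e by (auto simp: A_def B_def q_def power2_eq_square algebra_simps)
  have factor: "(cmod (of_real a - unity_root n k * of_real b))\<^sup>2 = A + B * u k" for k
    unfolding u_def unity_root_def cmod_sub_cis_mult_square A_def e(2)[symmetric]
    using e(1) by (auto simp: power2_eq_square algebra_simps)
  have "of_real (prod u (lower_totatives n)) = poly (cyclotomic_poly n) (of_real e)"
    unfolding u_def cyclotomic_form_of_real[OF assms(2), symmetric]
    by (simp add: cyclotomic_form_eq_prod poly_cyclotomic_poly)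
  then have "prod u (lower_totatives n) = cmod (poly (cyclotomic_poly n) (of_real e))"
    by (metis norm_of_real abs_of_nonneg prod_nonneg zero_le_power2 u_def)
  with e(1) assms(2) have prod_u: "prod u (lower_totatives n) \<ge> 1"
    using one_le_norm_cyclotomic_poly_at_sign[of n "of_real e"] by auto
  have "u k > 0" if "k \<in> lower_totatives n" for k
  proof -
    have "u k \<noteq> 0"
    proof
      assume "u k = 0"
      with that have "prod u (lower_totatives n) = 0" by (intro prod_zero) auto
      with prod_u show False by simp
    qed
    then show ?thesis by (simp add: u_def)
  qed
  then have "(A + B) ^ card (lower_totatives n) \<le> (\<Prod>k\<in>lower_totatives n. A + B * u k)"
    using assms prod_u \<open>A + B = q\<close> by (intro power_le_prod_affine) (auto simp: A_def B_def)
  also have "\<dots> = Re (cyclotomic_form n (of_real a) (of_real b))"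
    by (simp only: cyclotomic_form_of_real[OF assms(2)] factor Re_complex_of_real)
  also have "(A + B) ^ card (lower_totatives n) = q powr (totient n / 2)"
    using assms \<open>A + B = q\<close> by (simp add: totient_eq_double_card_lower_totatives powr_realpow)
  finally show ?thesis .
qed

lemma seven_le_quadratic_form:
  fixes p q :: int
  assumes "0 \<le> q" "q \<le> p" "3 \<le> p"
  shows "7 \<le> p\<^sup>2 - p * q + q\<^sup>2"
proof -
  consider "q \<le> 2" | "q \<ge> 3" by linarith
  then show ?thesis
  proof cases
    case 1
    have "p * (p - q) \<ge> 3 * (3 - q)"
      using assms 1 by (intro mult_mono) auto
    moreover have "q * q \<ge> 3 * q - 2"
      using assms 1 by (cases "q = 0 \<or> q = 1") (auto simp: antisym_conv1)
    ultimately show ?thesis by (simp add: power2_eq_square algebra_simps)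
  next
    case 2
    have "p * q \<ge> 3 * 3" using assms 2 by (intro mult_mono) auto
    moreover have "(p - q)\<^sup>2 \<ge> 0" by simp
    ultimately show ?thesis by (simp add: power2_eq_square algebra_simps)
  qed
qed

theorem mainTheorem3:
  fixes n :: nat and x y :: int
  assumes "n \<ge> 3"
    and "max \<bar>x\<bar> \<bar>y\<bar> \<ge> 2"
    and "Re (cyclotomic_form n (of_int x) (of_int y)) < 7 powr (real (totient n) / 2)"
  shows "max \<bar>x\<bar> \<bar>y\<bar> = 2"
proof (rule ccontr)
  assume "max \<bar>x\<bar> \<bar>y\<bar> \<noteq> 2"
  with assms(2) have "max \<bar>x\<bar> \<bar>y\<bar> \<ge> 3" by linarith
  then have "7 \<le> x\<^sup>2 - \<bar>x * y\<bar> + y\<^sup>2"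
    using seven_le_quadratic_form[of "\<bar>y\<bar>" "\<bar>x\<bar>"] seven_le_quadratic_form[of "\<bar>x\<bar>" "\<bar>y\<bar>"]
    by (cases "\<bar>x\<bar> \<le> \<bar>y\<bar>") (auto simp: abs_mult algebra_simps)
  then have "real_of_int 7 \<le> real_of_int (x\<^sup>2 - \<bar>x * y\<bar> + y\<^sup>2)"
    by (simp only: of_int_le_iff)
  then have seven: "7 \<le> (real_of_int x)\<^sup>2 - \<bar>real_of_int x * real_of_int y\<bar> + (real_of_int y)\<^sup>2"
    by simp
  then have "7 powr (real (totient n) / 2)
               \<le> ((real_of_int x)\<^sup>2 - \<bar>real_of_int x * real_of_int y\<bar> + (real_of_int y)\<^sup>2)
                    powr (real (totient n) / 2)"
    by (intro powr_mono2) auto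
  also have "\<dots> \<le> Re (cyclotomic_form n (of_int x) (of_int y))"
    using cyclotomic_form_lower_bound[OF assms(1), of "of_int x" "of_int y"] seven by simp
  finally show False using assms(3) by simp
qed

end
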